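(* Let $1\le p,q<\infty$ and $\theta>0$. The vanishing grand amalgam Lebesgue function space $$l^{\overset{\circ}{q}),\theta}(L^p)=\Big\{g\in l^{q),\theta}(L^p):\ \lim_{\varepsilon\to0}\varepsilon^{\theta}\sum_{n\in X}\Big(\int_n^{n+1}|g(x)|^p\,dx\Big)^{\frac{q(1+\varepsilon)}{p}}=0\Big\}$$ is a closed subspace of $l^{q),\theta}(L^p)$.
   Context: Let $X$ be one of $\mathbb N,\mathbb N_0,\mathbb Z$ and $I_k=[k,k+1)$ for $k\in X$. The space $l^{q),\theta}(L^p)$ consists of complex-valued measurable $g$ on $\bigcup_{k\in X}I_k$ with $g\chi_{I_k}\in L^p$ for all $k$ and $$\|g\|_{p,q),\theta}:=\sup_{\varepsilon>0}\Big(\varepsilon^{\theta}\sum_{k\in X}\Big(\int_k^{k+1}|g(x)|^p\,dx\Big)^{\frac{q(1+\varepsilon)}{p}}\Big)^{\frac{1}{q(1+\varepsilon)}}<\infty,$$ with the topology given by this norm. *)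

theory Defs
  imports "HOL-Analysis.Analysis"
begin

text \<open>Index set X is one of N = {1..}, N0 = {0..}, Z, viewed as subsets of int.
  I_k = [k, k+1).  The underlying domain is the union of the I_k.\<close>

definition blk :: "int \<Rightarrow> real set" where
  "blk k = {real_of_int k ..< real_of_int k + 1}"

definition dom_X :: "int set \<Rightarrow> real set" where
  "dom_X X = (\<Union>k\<in>X. blk k)"

definition blocknorm :: "real \<Rightarrow> (real \<Rightarrow> complex) \<Rightarrow> int \<Rightarrow> real" where
  "blocknorm p g k = (LINT x:blk k|lebesgue. norm (g x) powr p)"

definition gterm :: "int set \<Rightarrow> real \<Rightarrow> real \<Rightarrow> real \<Rightarrow> (real \<Rightarrow> complex) \<Rightarrow> real \<Rightarrow> real" where
  "gterm X p q \<theta> g \<epsilon> =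
     \<epsilon> powr \<theta> * (\<Sum>\<^sub>\<infinity>k\<in>X. blocknorm p g k powr (q * (1 + \<epsilon>) / p))"

text \<open>membership in l^{q),theta}(L^p): measurable on the domain, each g chi_{I_k} in L^p,
  and the norm (a supremum over eps > 0) is finite, i.e. every series converges and
  the family of values is bounded above.\<close>
definition in_glq :: "int set \<Rightarrow> real \<Rightarrow> real \<Rightarrow> real \<Rightarrow> (real \<Rightarrow> complex) \<Rightarrow> bool" where
  "in_glq X p q \<theta> g \<longleftrightarrow>
     set_borel_measurable lebesgue (dom_X X) g \<and>
     (\<forall>k\<in>X. set_integrable lebesgue (blk k) (\<lambda>x. norm (g x) powr p)) \<and>
     (\<forall>\<epsilon>>0. (\<lambda>k. blocknorm p g k powr (q * (1 + \<epsilon>) / p)) summable_on X) \<and>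
     bdd_above ((\<lambda>\<epsilon>. gterm X p q \<theta> g \<epsilon> powr (1 / (q * (1 + \<epsilon>)))) ` {0<..})"

definition glq_norm :: "int set \<Rightarrow> real \<Rightarrow> real \<Rightarrow> real \<Rightarrow> (real \<Rightarrow> complex) \<Rightarrow> real" where
  "glq_norm X p q \<theta> g = (SUP \<epsilon>\<in>{0<..}. gterm X p q \<theta> g \<epsilon> powr (1 / (q * (1 + \<epsilon>))))"

definition vanishing_glq :: "int set \<Rightarrow> real \<Rightarrow> real \<Rightarrow> real \<Rightarrow> (real \<Rightarrow> complex) set" where
  "vanishing_glq X p q \<theta> =
     {g. in_glq X p q \<theta> g \<and> ((gterm X p q \<theta> g) \<longlongrightarrow> 0) (at_right 0)}"

end

theory Submission
  imports Defs
begin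

text \<open>If |u| \<le> a (|f| + |h|) pointwise, then every block integral of |u|^p is at most
  (2a)^p times the sum of those of f and h, and so, for 0 < \<epsilon> \<le> 1, the quantity
  \<epsilon>^\<theta> \<Sum>_k (\<integral>_k^(k+1) |u|^p)^(q(1+\<epsilon>)/p) is bounded by a constant independent of \<epsilon>
  times the sum of the corresponding quantities for f and h. This makes the vanishing
  functions a linear subspace. For closedness, apply the bound to |g| \<le> |G_n| + |G_n - g|:
  the contribution of G_n - g is at most \<parallel>G_n - g\<parallel>^q once that norm is \<le> 1, so the
  limit as \<epsilon> \<rightarrow> 0 for g is at most a constant times \<parallel>G_n - g\<parallel>^q for every large n.
  Neither the particular index set X nor \<theta> > 0 plays a role.\<close>

lemma powr_le_scaled_sum_powr:
  fixes x y z a t :: real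
  assumes "0 \<le> x" "0 \<le> y" "0 \<le> z" "0 \<le> a" "0 \<le> t" "z \<le> a * (x + y)"
  shows "z powr t \<le> (2 * a) powr t * (x powr t + y powr t)"
proof -
  have "a * (x + y) \<le> a * (2 * max x y)"
    using assms by (intro mult_left_mono) auto
  then have "z \<le> 2 * a * max x y"
    using assms by simp
  then have "z powr t \<le> (2 * a * max x y) powr t"
    using assms by (intro powr_mono2) auto
  also have "\<dots> = (2 * a) powr t * max x y powr t"
    by (rule powr_mult)
  also have "\<dots> \<le> (2 * a) powr t * (x powr t + y powr t)"
    by (intro mult_left_mono) (auto simp: max_def)
  finally show ?thesis .
qed

lemma powr_le_max_one_powr:
  fixes x s t :: real
  assumes "0 \<le> x" "0 \<le> s" "s \<le> t"
  shows "x powr s \<le> max 1 x powr t"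
proof -
  have "x powr s \<le> max 1 x powr s"
    using assms by (intro powr_mono2) auto
  also have "\<dots> \<le> max 1 x powr t"
    using assms by (intro powr_mono) auto
  finally show ?thesis .
qed

lemma infsum_powr_dominated:
  fixes a b c :: "'i \<Rightarrow> real"
  assumes dom: "\<And>k. k \<in> X \<Longrightarrow> a k \<le> C * (b k + c k)"
    and nonneg: "\<And>k. 0 \<le> a k" "\<And>k. 0 \<le> b k" "\<And>k. 0 \<le> c k" "0 \<le> C" "0 \<le> s"
    and b: "(\<lambda>k. b k powr s) summable_on X" and c: "(\<lambda>k. c k powr s) summable_on X"
  shows "(\<lambda>k. a k powr s) summable_on X"
    and "(\<Sum>\<^sub>\<infinity>k\<in>X. a k powr s)
           \<le> (2 * C) powr s * ((\<Sum>\<^sub>\<infinity>k\<in>X. b k powr s) + (\<Sum>\<^sub>\<infinity>k\<in>X. c k powr s))"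
proof -
  have pointwise: "a k powr s \<le> (2 * C) powr s * (b k powr s + c k powr s)" if "k \<in> X" for k
    using dom[OF that] nonneg by (intro powr_le_scaled_sum_powr) auto
  have majorant: "(\<lambda>k. (2 * C) powr s * (b k powr s + c k powr s)) summable_on X"
    using b c by (intro summable_on_cmult_right summable_on_add)
  show a: "(\<lambda>k. a k powr s) summable_on X"
    by (rule summable_on_comparison_test[OF majorant pointwise]) auto
  have "(\<Sum>\<^sub>\<infinity>k\<in>X. a k powr s) \<le> (\<Sum>\<^sub>\<infinity>k\<in>X. (2 * C) powr s * (b k powr s + c k powr s))"
    by (rule infsum_mono[OF a majorant pointwise])
  also have "\<dots> = (2 * C) powr s * ((\<Sum>\<^sub>\<infinity>k\<in>X. b k powr s) + (\<Sum>\<^sub>\<infinity>k\<in>X. c k powr s))"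
    using b c by (simp add: infsum_cmult_right' infsum_add)
  finally show "(\<Sum>\<^sub>\<infinity>k\<in>X. a k powr s)
           \<le> (2 * C) powr s * ((\<Sum>\<^sub>\<infinity>k\<in>X. b k powr s) + (\<Sum>\<^sub>\<infinity>k\<in>X. c k powr s))" .
qed

lemma set_borel_measurable_norm_powr:
  fixes f :: "'a \<Rightarrow> 'b::real_normed_vector"
  assumes "set_borel_measurable M A f" "A \<in> sets M"
  shows "set_borel_measurable M A (\<lambda>x. norm (f x) powr p)"
proof -
  have "f \<in> borel_measurable (restrict_space M A)"
    using assms by (simp add: set_borel_measurable_def borel_measurable_restrict_space_iff)
  then have "(\<lambda>x. norm (f x) powr p) \<in> borel_measurable (restrict_space M A)"
    by measurable
  then show ?thesis
    using assms by (simp add: set_borel_measurable_def borel_measurable_restrict_space_iff)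
qed

lemma set_borel_measurable_add:
  fixes f g :: "'a \<Rightarrow> 'b::{real_normed_vector, second_countable_topology}"
  assumes "set_borel_measurable M A f" "set_borel_measurable M A g"
  shows "set_borel_measurable M A (\<lambda>x. f x + g x)"
  using borel_measurable_add[OF assms[unfolded set_borel_measurable_def]]
  by (simp add: set_borel_measurable_def scaleR_add_right)

lemma set_borel_measurable_diff:
  fixes f g :: "'a \<Rightarrow> 'b::{real_normed_vector, second_countable_topology}"
  assumes "set_borel_measurable M A f" "set_borel_measurable M A g"
  shows "set_borel_measurable M A (\<lambda>x. f x - g x)"
  using borel_measurable_diff[OF assms[unfolded set_borel_measurable_def]]
  by (simp add: set_borel_measurable_def scaleR_diff_right)

lemma set_borel_measurable_cmult:
  fixes f :: "'a \<Rightarrow> 'b::{real_normed_algebra, second_countable_topology}"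
  assumes "set_borel_measurable M A f"
  shows "set_borel_measurable M A (\<lambda>x. c * f x)"
  using borel_measurable_times[OF borel_measurable_const assms[unfolded set_borel_measurable_def]]
  by (simp add: set_borel_measurable_def mult_scaleR_right)

lemma sets_blk [measurable]: "blk k \<in> sets lebesgue"
  unfolding blk_def by simp

lemma blk_subset_dom_X: "k \<in> X \<Longrightarrow> blk k \<subseteq> dom_X X"
  unfolding dom_X_def by auto

lemma blocknorm_nonneg: "0 \<le> blocknorm p g k"
  unfolding blocknorm_def set_lebesgue_integral_def
  by (intro Bochner_Integration.integral_nonneg) auto

lemma gterm_nonneg: "0 \<le> \<epsilon> \<Longrightarrow> 0 \<le> gterm X p q \<theta> g \<epsilon>"
  unfolding gterm_def by (intro mult_nonneg_nonneg infsum_nonneg) auto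

lemma blocknorm_dominated:
  fixes u f h :: "real \<Rightarrow> complex"
  assumes p: "0 \<le> p" and a: "0 \<le> a"
    and u: "set_borel_measurable lebesgue (blk k) u"
    and f: "set_integrable lebesgue (blk k) (\<lambda>x. norm (f x) powr p)"
    and h: "set_integrable lebesgue (blk k) (\<lambda>x. norm (h x) powr p)"
    and dom: "\<And>x. norm (u x) \<le> a * (norm (f x) + norm (h x))"
  shows "set_integrable lebesgue (blk k) (\<lambda>x. norm (u x) powr p)"
    and "blocknorm p u k \<le> (2 * a) powr p * (blocknorm p f k + blocknorm p h k)"
proof -
  define C where "C = (2 * a) powr p"
  have pointwise: "norm (u x) powr p \<le> C * (norm (f x) powr p + norm (h x) powr p)" for x
    unfolding C_def using p a dom by (intro powr_le_scaled_sum_powr) auto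
  have majorant: "set_integrable lebesgue (blk k) (\<lambda>x. C * (norm (f x) powr p + norm (h x) powr p))"
    using f h by (intro set_integrable_mult_right set_integral_add(1))
  show u_int: "set_integrable lebesgue (blk k) (\<lambda>x. norm (u x) powr p)"
  proof (rule set_integrable_bound[OF majorant set_borel_measurable_norm_powr[OF u sets_blk]])
    show "AE x in lebesgue. x \<in> blk k \<longrightarrow> norm (norm (u x) powr p)
        \<le> norm (C * (norm (f x) powr p + norm (h x) powr p))"
      using pointwise by (intro AE_I2) (simp add: C_def)
  qed
  have "blocknorm p u k \<le> (LINT x:blk k|lebesgue. C * (norm (f x) powr p + norm (h x) powr p))"
    unfolding blocknorm_def by (rule set_integral_mono[OF u_int majorant pointwise])
  also have "\<dots> = C * (blocknorm p f k + blocknorm p h k)"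
    unfolding blocknorm_def set_integral_mult_right set_integral_add(2)[OF f h] ..
  finally show "blocknorm p u k \<le> (2 * a) powr p * (blocknorm p f k + blocknorm p h k)"
    unfolding C_def .
qed

lemma gterm_dominated:
  assumes p: "0 < p" and q: "0 \<le> q" and \<epsilon>: "0 < \<epsilon>" and C: "0 \<le> C"
    and dom: "\<And>k. k \<in> X \<Longrightarrow> blocknorm p u k \<le> C * (blocknorm p f k + blocknorm p h k)"
    and f: "(\<lambda>k. blocknorm p f k powr (q * (1 + \<epsilon>) / p)) summable_on X"
    and h: "(\<lambda>k. blocknorm p h k powr (q * (1 + \<epsilon>) / p)) summable_on X"
  shows "(\<lambda>k. blocknorm p u k powr (q * (1 + \<epsilon>) / p)) summable_on X"
    and "gterm X p q \<theta> u \<epsilon>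
           \<le> (2 * C) powr (q * (1 + \<epsilon>) / p) * (gterm X p q \<theta> f \<epsilon> + gterm X p q \<theta> h \<epsilon>)"
proof -
  have s: "0 \<le> q * (1 + \<epsilon>) / p"
    using p q \<epsilon> by simp
  note infsum_bound = infsum_powr_dominated[OF dom blocknorm_nonneg blocknorm_nonneg
      blocknorm_nonneg C s f h]
  show "(\<lambda>k. blocknorm p u k powr (q * (1 + \<epsilon>) / p)) summable_on X"
    by (rule infsum_bound(1))
  show "gterm X p q \<theta> u \<epsilon>
           \<le> (2 * C) powr (q * (1 + \<epsilon>) / p) * (gterm X p q \<theta> f \<epsilon> + gterm X p q \<theta> h \<epsilon>)"
    using mult_left_mono[OF infsum_bound(2), of "\<epsilon> powr \<theta>"]
    unfolding gterm_def by (simp add: algebra_simps)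
qed

context
  fixes X :: "int set" and p q \<theta> a :: real and u f h :: "real \<Rightarrow> complex"
  assumes p: "0 < p" and q: "1 \<le> q" and a: "0 \<le> a"
    and f: "in_glq X p q \<theta> f" and h: "in_glq X p q \<theta> h"
    and u: "set_borel_measurable lebesgue (dom_X X) u"
    and dom: "\<And>x. norm (u x) \<le> a * (norm (f x) + norm (h x))"
begin

lemma blocknorm_dominated_on_X:
  assumes "k \<in> X"
  shows "set_integrable lebesgue (blk k) (\<lambda>x. norm (u x) powr p)"
    and "blocknorm p u k \<le> (2 * a) powr p * (blocknorm p f k + blocknorm p h k)"
  using blocknorm_dominated[OF _ a set_borel_measurable_subset[OF u sets_blk blk_subset_dom_X]
      _ _ dom] p f h assms
  by (auto simp: in_glq_def)

lemma gterm_dominated_on_X: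
  assumes "0 < \<epsilon>"
  shows "(\<lambda>k. blocknorm p u k powr (q * (1 + \<epsilon>) / p)) summable_on X"
    and "gterm X p q \<theta> u \<epsilon> \<le> (2 * (2 * a) powr p) powr (q * (1 + \<epsilon>) / p)
           * (gterm X p q \<theta> f \<epsilon> + gterm X p q \<theta> h \<epsilon>)"
  using gterm_dominated[OF p _ assms _ blocknorm_dominated_on_X(2)] p q f h assms
  by (auto simp: in_glq_def)

lemma in_glq_dominated: "in_glq X p q \<theta> u"
proof -
  define C where "C = 2 * (2 * a) powr p"
  obtain Mf where Mf: "\<And>\<epsilon>. 0 < \<epsilon> \<Longrightarrow> gterm X p q \<theta> f \<epsilon> powr (1 / (q * (1 + \<epsilon>))) \<le> Mf"
    using f unfolding in_glq_def bdd_above_def by auto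
  obtain Mh where Mh: "\<And>\<epsilon>. 0 < \<epsilon> \<Longrightarrow> gterm X p q \<theta> h \<epsilon> powr (1 / (q * (1 + \<epsilon>))) \<le> Mh"
    using h unfolding in_glq_def bdd_above_def by auto
  have "gterm X p q \<theta> u \<epsilon> powr (1 / (q * (1 + \<epsilon>))) \<le> 2 * C powr (1 / p) * (Mf + Mh)"
    if \<epsilon>: "0 < \<epsilon>" for \<epsilon>
  proof -
    define r where "r = q * (1 + \<epsilon>)"
    have r: "1 \<le> r"
      unfolding r_def using q \<epsilon> by (smt (verit) mult_le_cancel_left1)
    have "gterm X p q \<theta> u \<epsilon> powr (1 / r) \<le> (2 * C powr (r / p)) powr (1 / r)
        * (gterm X p q \<theta> f \<epsilon> powr (1 / r) + gterm X p q \<theta> h \<epsilon> powr (1 / r))"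
      using gterm_dominated_on_X(2)[OF \<epsilon>] gterm_nonneg[of \<epsilon>] \<epsilon> r
      by (intro powr_le_scaled_sum_powr) (auto simp: C_def r_def)
    also have "(2 * C powr (r / p)) powr (1 / r) = 2 powr (1 / r) * C powr (1 / p)"
      using p r by (simp add: C_def powr_mult powr_powr)
    also have "\<dots> * (gterm X p q \<theta> f \<epsilon> powr (1 / r) + gterm X p q \<theta> h \<epsilon> powr (1 / r))
        \<le> 2 * C powr (1 / p) * (Mf + Mh)"
    proof (intro mult_mono)
      show "2 powr (1 / r) \<le> 2"
        using powr_mono[of "1 / r" 1 2] r by simp
      show "gterm X p q \<theta> f \<epsilon> powr (1 / r) + gterm X p q \<theta> h \<epsilon> powr (1 / r) \<le> Mf + Mh"
        using Mf[OF \<epsilon>] Mh[OF \<epsilon>] unfolding r_def by simp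
    qed auto
    finally show ?thesis
      unfolding r_def .
  qed
  then show ?thesis
    unfolding in_glq_def bdd_above_def
    using u blocknorm_dominated_on_X(1) gterm_dominated_on_X(1) by auto
qed

lemma gterm_dominated_near_zero:
  assumes "0 < \<epsilon>" "\<epsilon> \<le> 1"
  shows "gterm X p q \<theta> u \<epsilon> \<le> max 1 (2 * (2 * a) powr p) powr (2 * q / p)
           * (gterm X p q \<theta> f \<epsilon> + gterm X p q \<theta> h \<epsilon>)"
proof -
  have "(2 * (2 * a) powr p) powr (q * (1 + \<epsilon>) / p) \<le> max 1 (2 * (2 * a) powr p) powr (2 * q / p)"
    using p q assms by (intro powr_le_max_one_powr divide_right_mono) auto
  then show ?thesis
    using gterm_dominated_on_X(2)[OF assms(1)] gterm_nonneg[of \<epsilon>] assms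
    by (smt (verit) mult_right_mono)
qed

end

lemma gterm_zero: "gterm X p q \<theta> (\<lambda>x. 0) = (\<lambda>\<epsilon>. 0)"
  by (simp add: gterm_def blocknorm_def fun_eq_iff)

lemma in_glq_zero: "in_glq X p q \<theta> (\<lambda>x. 0)"
  unfolding in_glq_def gterm_zero by (auto simp: blocknorm_def set_borel_measurable_def bdd_above_def)

lemma zero_in_vanishing_glq: "(\<lambda>x. 0) \<in> vanishing_glq X p q \<theta>"
  unfolding vanishing_glq_def by (simp add: in_glq_zero gterm_zero)

lemma eventually_at_right_zero_le_one: "\<forall>\<^sub>F \<epsilon> in at_right (0::real). 0 < \<epsilon> \<and> \<epsilon> \<le> 1"
  unfolding eventually_at_right_field by (intro exI[of _ 1]) auto

lemma vanishing_glq_dominated: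
  assumes p: "0 < p" and q: "1 \<le> q" and a: "0 \<le> a"
    and f: "f \<in> vanishing_glq X p q \<theta>" and h: "h \<in> vanishing_glq X p q \<theta>"
    and u: "set_borel_measurable lebesgue (dom_X X) u"
    and dom: "\<And>x. norm (u x) \<le> a * (norm (f x) + norm (h x))"
  shows "u \<in> vanishing_glq X p q \<theta>"
proof -
  define K where "K = max 1 (2 * (2 * a) powr p) powr (2 * q / p)"
  have f': "in_glq X p q \<theta> f" "(gterm X p q \<theta> f \<longlongrightarrow> 0) (at_right 0)"
    and h': "in_glq X p q \<theta> h" "(gterm X p q \<theta> h \<longlongrightarrow> 0) (at_right 0)"
    using f h unfolding vanishing_glq_def by auto
  have "(gterm X p q \<theta> u \<longlongrightarrow> 0) (at_right 0)"
  proof (rule tendsto_sandwich[of "\<lambda>_. 0" _ _ "\<lambda>\<epsilon>. K * (gterm X p q \<theta> f \<epsilon> + gterm X p q \<theta> h \<epsilon>)"])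
    show "\<forall>\<^sub>F \<epsilon> in at_right 0. 0 \<le> gterm X p q \<theta> u \<epsilon>"
      using eventually_at_right_zero_le_one by eventually_elim (simp add: gterm_nonneg)
    show "\<forall>\<^sub>F \<epsilon> in at_right 0. gterm X p q \<theta> u \<epsilon> \<le> K * (gterm X p q \<theta> f \<epsilon> + gterm X p q \<theta> h \<epsilon>)"
      using eventually_at_right_zero_le_one unfolding K_def
      by eventually_elim (intro gterm_dominated_near_zero[OF p q a f'(1) h'(1) u dom]; simp)
    show "((\<lambda>\<epsilon>. K * (gterm X p q \<theta> f \<epsilon> + gterm X p q \<theta> h \<epsilon>)) \<longlongrightarrow> 0) (at_right 0)"
      using tendsto_mult_right_zero[OF tendsto_add_zero[OF f'(2) h'(2)]] by simp
  qed simp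
  then show ?thesis
    unfolding vanishing_glq_def using in_glq_dominated[OF p q a f'(1) h'(1) u dom] by simp
qed

lemma vanishing_glq_add:
  assumes p: "0 < p" and q: "1 \<le> q"
    and f: "f \<in> vanishing_glq X p q \<theta>" and g: "g \<in> vanishing_glq X p q \<theta>"
  shows "(\<lambda>x. f x + g x) \<in> vanishing_glq X p q \<theta>"
proof (rule vanishing_glq_dominated[OF p q _ f g])
  show "set_borel_measurable lebesgue (dom_X X) (\<lambda>x. f x + g x)"
    using f g unfolding vanishing_glq_def in_glq_def by (blast intro: set_borel_measurable_add)
  show "norm (f x + g x) \<le> 1 * (norm (f x) + norm (g x))" for x
    by (simp add: norm_triangle_ineq)
qed simp

lemma vanishing_glq_cmult:
  assumes p: "0 < p" and q: "1 \<le> q" and g: "g \<in> vanishing_glq X p q \<theta>"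
  shows "(\<lambda>x. c * g x) \<in> vanishing_glq X p q \<theta>"
proof (rule vanishing_glq_dominated[OF p q _ g g])
  show "set_borel_measurable lebesgue (dom_X X) (\<lambda>x. c * g x)"
    using g unfolding vanishing_glq_def in_glq_def by (blast intro: set_borel_measurable_cmult)
  show "norm (c * g x) \<le> norm c * (norm (g x) + norm (g x))" for x
    by (simp add: norm_mult mult_left_mono)
qed simp

lemma gterm_powr_le_glq_norm:
  assumes "in_glq X p q \<theta> g" "0 < \<epsilon>"
  shows "gterm X p q \<theta> g \<epsilon> powr (1 / (q * (1 + \<epsilon>))) \<le> glq_norm X p q \<theta> g"
  unfolding glq_norm_def by (rule cSUP_upper) (use assms in \<open>auto simp: in_glq_def\<close>)

lemma glq_norm_nonneg: "in_glq X p q \<theta> g \<Longrightarrow> 0 \<le> glq_norm X p q \<theta> g"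
  using gterm_powr_le_glq_norm[of X p q \<theta> g 1] by (meson order_trans powr_ge_zero zero_less_one)

lemma gterm_le_glq_norm_powr:
  assumes q: "0 < q" and g: "in_glq X p q \<theta> g" and \<epsilon>: "0 < \<epsilon>"
    and small: "glq_norm X p q \<theta> g \<le> 1"
  shows "gterm X p q \<theta> g \<epsilon> \<le> glq_norm X p q \<theta> g powr q"
proof -
  define r where "r = q * (1 + \<epsilon>)"
  have r: "q \<le> r" "0 < r"
    unfolding r_def using q \<epsilon> by auto
  have "gterm X p q \<theta> g \<epsilon> = (gterm X p q \<theta> g \<epsilon> powr (1 / r)) powr r"
    using r \<epsilon> gterm_nonneg[of \<epsilon>] by (simp add: powr_powr)
  also have "\<dots> \<le> glq_norm X p q \<theta> g powr r"
    using gterm_powr_le_glq_norm[OF g \<epsilon>] r unfolding r_def by (intro powr_mono2) auto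
  also have "\<dots> \<le> glq_norm X p q \<theta> g powr q"
    using r small glq_norm_nonneg[OF g] by (intro powr_mono') auto
  finally show ?thesis .
qed

lemma vanishing_glq_closed:
  assumes p: "0 < p" and q: "1 \<le> q"
    and G: "\<And>n. G n \<in> vanishing_glq X p q \<theta>" and g: "in_glq X p q \<theta> g"
    and lim: "(\<lambda>n. glq_norm X p q \<theta> (\<lambda>x. G n x - g x)) \<longlonglongrightarrow> 0"
  shows "g \<in> vanishing_glq X p q \<theta>"
proof -
  define N where "N n = glq_norm X p q \<theta> (\<lambda>x. G n x - g x)" for n
  define K where "K = max 1 (2 * (2 * 1) powr p) powr (2 * q / p)"
  have G': "in_glq X p q \<theta> (G n)" "(gterm X p q \<theta> (G n) \<longlongrightarrow> 0) (at_right 0)" for n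
    using G unfolding vanishing_glq_def by auto
  have G_meas: "set_borel_measurable lebesgue (dom_X X) (G n)"
    and g_meas: "set_borel_measurable lebesgue (dom_X X) g" for n
    using G'(1) g unfolding in_glq_def by auto
  have diff: "in_glq X p q \<theta> (\<lambda>x. G n x - g x)" for n
  proof (rule in_glq_dominated[OF p q _ G'(1) g set_borel_measurable_diff[OF G_meas g_meas]])
    show "norm (G n x - g x) \<le> 1 * (norm (G n x) + norm (g x))" for x
      by (simp add: norm_triangle_ineq4)
  qed simp
  have bound: "gterm X p q \<theta> g \<epsilon> \<le> K * (gterm X p q \<theta> (G n) \<epsilon> + N n powr q)"
    if \<epsilon>: "0 < \<epsilon>" "\<epsilon> \<le> 1" and small: "N n \<le> 1" for n \<epsilon>
  proof -
    have "norm (g x) \<le> 1 * (norm (G n x) + norm (G n x - g x))" for x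
      using norm_triangle_ineq4[of "G n x" "G n x - g x"] by simp
    then have "gterm X p q \<theta> g \<epsilon>
        \<le> K * (gterm X p q \<theta> (G n) \<epsilon> + gterm X p q \<theta> (\<lambda>x. G n x - g x) \<epsilon>)"
      unfolding K_def by (intro gterm_dominated_near_zero[OF p q _ G'(1) diff g_meas] \<epsilon>) auto
    also have "\<dots> \<le> K * (gterm X p q \<theta> (G n) \<epsilon> + N n powr q)"
      using gterm_le_glq_norm_powr[OF _ diff \<epsilon>(1)] q small unfolding K_def N_def
      by (intro mult_left_mono add_left_mono) auto
    finally show ?thesis .
  qed
  have "(gterm X p q \<theta> g \<longlongrightarrow> 0) (at_right 0)"
  proof (rule order_tendstoI)
    show "\<forall>\<^sub>F \<epsilon> in at_right 0. \<delta> < gterm X p q \<theta> g \<epsilon>" if \<delta>: "\<delta> < 0" for \<delta>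
      using eventually_at_right_zero_le_one
      by eventually_elim (auto intro: less_le_trans[OF \<delta> gterm_nonneg])
    show "\<forall>\<^sub>F \<epsilon> in at_right 0. gterm X p q \<theta> g \<epsilon> < \<delta>" if \<delta>: "0 < \<delta>" for \<delta>
    proof -
      have "(\<lambda>n. K * N n powr q) \<longlonglongrightarrow> K * 0"
        using lim q glq_norm_nonneg[OF diff] unfolding N_def
        by (intro tendsto_mult tendsto_const tendsto_zero_powrI) auto
      then have "\<forall>\<^sub>F n in sequentially. K * N n powr q < \<delta> / 2 \<and> N n < 1"
        using \<delta> lim unfolding N_def by (intro eventually_conj order_tendstoD(2)) auto
      then obtain n where n: "K * N n powr q < \<delta> / 2" "N n < 1"
        using eventually_sequentially by auto
      have "((\<lambda>\<epsilon>. K * gterm X p q \<theta> (G n) \<epsilon>) \<longlongrightarrow> K * 0) (at_right 0)"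
        by (intro tendsto_mult tendsto_const G'(2))
      then have "\<forall>\<^sub>F \<epsilon> in at_right 0. K * gterm X p q \<theta> (G n) \<epsilon> < \<delta> / 2"
        using \<delta> by (intro order_tendstoD(2)) auto
      then show ?thesis
        using eventually_at_right_zero_le_one
      proof eventually_elim
        case (elim \<epsilon>)
        then show ?case
          using bound[of \<epsilon> n] n by (simp add: algebra_simps)
      qed
    qed
  qed
  with g show ?thesis
    unfolding vanishing_glq_def by simp
qed

theorem theorem2p11:
  fixes X :: "int set" and p q \<theta> :: real
  assumes "X \<in> {{1..}, {0..}, UNIV}"
    and "1 \<le> p" and "1 \<le> q" and "\<theta> > 0"
  shows "(\<forall>g\<in>vanishing_glq X p q \<theta>. in_glq X p q \<theta> g)
    \<and> (\<lambda>x. 0) \<in> vanishing_glq X p q \<theta>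
    \<and> (\<forall>f\<in>vanishing_glq X p q \<theta>. \<forall>g\<in>vanishing_glq X p q \<theta>.
          (\<lambda>x. f x + g x) \<in> vanishing_glq X p q \<theta>)
    \<and> (\<forall>c::complex. \<forall>g\<in>vanishing_glq X p q \<theta>. (\<lambda>x. c * g x) \<in> vanishing_glq X p q \<theta>)
    \<and> (\<forall>G g. (\<forall>n. G n \<in> vanishing_glq X p q \<theta>) \<longrightarrow> in_glq X p q \<theta> g
          \<longrightarrow> (\<lambda>n. glq_norm X p q \<theta> (\<lambda>x. G n x - g x)) \<longlonglongrightarrow> 0
          \<longrightarrow> g \<in> vanishing_glq X p q \<theta>)"
proof -
  have p: "0 < p" and q: "1 \<le> q"
    using assms by auto
  have "\<forall>g\<in>vanishing_glq X p q \<theta>. in_glq X p q \<theta> g"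
    by (simp add: vanishing_glq_def)
  then show ?thesis
    using zero_in_vanishing_glq vanishing_glq_add[OF p q] vanishing_glq_cmult[OF p q]
      vanishing_glq_closed[OF p q]
    by blast
qed

end
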